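(* Under the setting of the FPI method below (with $\phi,\psi$ Lipschitz with constants $L_1,L_2$, $A+\Omega B=M-N$, $M$ nonsingular, and a solution $x^*$ of the VNCP), let $\alpha=\|M^{-1}\|$, $\beta=\|N\|+L_1+L_2\|\Omega\|$, $\gamma=\|A-\Omega B\|+L_1+L_2\|\Omega\|$, $y^*=|(A-\Omega B)x^*+\phi(x^* )-\Omega\psi(x^* )|$, and $$E_\gamma^{(k)}=\begin{bmatrix}\gamma\|x^k-x^*\|\\ \|y^k-y^*\|\end{bmatrix},\qquad T_\gamma=\begin{bmatrix}\alpha\beta & \alpha\gamma\\ \tau\alpha\beta & \tau\alpha\gamma+|1-\tau|\end{bmatrix}.$$ Then for all $k\ge0$, $\|E_\gamma^{(k+1)}\|_\infty\le\|T_\gamma\|_\infty\|E_\gamma^{(k)}\|_\infty$. Moreover, for $\tau>0$, $\|T_\gamma\|_\infty<1$ if and only if $$\alpha(\beta+\gamma)<1\quad\text{and}\quad 0<\tau<\frac{2}{\alpha(\beta+\gamma)+1}.$$ Consequently, if these conditions hold, the sequence $\{x^k\}$ generated by the FPI method converges to $x^*$ (and $x^*$ is the unique solution of the VNCP).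
   Context: The VNCP is: find $x\in\mathbb{R}^n$ with $Ax+\phi(x)\ge0$, $Bx+\psi(x)\ge0$, $(Ax+\phi(x))^T(Bx+\psi(x))=0$, where $A,B\in\mathbb{R}^{n\times n}$ and $\phi,\psi:\mathbb{R}^n\to\mathbb{R}^n$ act componentwise. $\Omega$ is a positive diagonal matrix; $\|\phi(u)-\phi(v)\|\le L_1\|u-v\|$, $\|\psi(u)-\psi(v)\|\le L_2\|u-v\|$ for all $u,v$. The FPI method with splitting $A+\Omega B=M-N$ ($M$ nonsingular) and parameter $\tau>0$ generates from any $(x^0,y^0)$: $x^{k+1}=M^{-1}[Nx^k+y^k-\phi(x^k)-\Omega\psi(x^k)]$, $y^{k+1}=(1-\tau)y^k+\tau|(A-\Omega B)x^{k+1}+\phi(x^{k+1})-\Omega\psi(x^{k+1})|$, with $|\cdot|$ componentwise absolute value. $\|\cdot\|$ is the Euclidean norm / spectral norm, and $\|\cdot\|_\infty$ is the max-norm on $\mathbb{R}^2$ and the induced (max row sum) matrix norm. *)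

theory Defs
  imports "HOL-Analysis.Analysis"
begin

definition vabs :: "real ^ 'n \<Rightarrow> real ^ 'n" where
  "vabs v = (\<chi> i. \<bar>v $ i\<bar>)"

definition snorm :: "real ^ 'n ^ 'm \<Rightarrow> real" where
  "snorm M = onorm (\<lambda>x. M *v x)"

definition pos_diag :: "real ^ 'n ^ 'n \<Rightarrow> bool" where
  "pos_diag W \<longleftrightarrow> (\<forall>i j. i \<noteq> j \<longrightarrow> W $ i $ j = 0) \<and> (\<forall>i. W $ i $ i > 0)"

definition componentwise :: "(real ^ 'n \<Rightarrow> real ^ 'n) \<Rightarrow> bool" where
  "componentwise f \<longleftrightarrow> (\<exists>g. \<forall>x. f x = (\<chi> i. g i (x $ i)))"

definition lipschitz_const :: "(real ^ 'n \<Rightarrow> real ^ 'n) \<Rightarrow> real \<Rightarrow> bool" where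
  "lipschitz_const f L \<longleftrightarrow> (\<forall>u v. norm (f u - f v) \<le> L * norm (u - v))"

definition VNCP_sol :: "real ^ 'n ^ 'n \<Rightarrow> real ^ 'n ^ 'n \<Rightarrow> (real ^ 'n \<Rightarrow> real ^ 'n)
    \<Rightarrow> (real ^ 'n \<Rightarrow> real ^ 'n) \<Rightarrow> real ^ 'n \<Rightarrow> bool" where
  "VNCP_sol A B \<phi> \<psi> x \<longleftrightarrow>
     (\<forall>i. (A *v x + \<phi> x) $ i \<ge> 0) \<and> (\<forall>i. (B *v x + \<psi> x) $ i \<ge> 0) \<and>
     (A *v x + \<phi> x) \<bullet> (B *v x + \<psi> x) = 0"

definition norm_inf2 :: "real \<Rightarrow> real \<Rightarrow> real" where
  "norm_inf2 a b = max \<bar>a\<bar> \<bar>b\<bar>"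

definition mnorm_inf2 :: "real \<Rightarrow> real \<Rightarrow> real \<Rightarrow> real \<Rightarrow> real" where
  "mnorm_inf2 t11 t12 t21 t22 = max (\<bar>t11\<bar> + \<bar>t12\<bar>) (\<bar>t21\<bar> + \<bar>t22\<bar>)"

end

theory Submission
  imports Defs
begin

text \<open>
  At a solution \<open>x*\<close> the complementarity conditions turn the absolute value into
  \<open>|(A - \<Omega>B)x* + \<phi>(x*) - \<Omega>\<psi>(x*)| = (A + \<Omega>B)x* + \<phi>(x*) + \<Omega>\<psi>(x*)\<close>, so \<open>(x*, y*)\<close> is a fixed
  point of the FPI map. Subtracting the fixed-point equations and using the Lipschitz bounds and
  \<open>||a| - |b|| \<le> |a - b|\<close> bounds the new errors linearly by the old ones, with the entries of
  \<open>T\<^sub>\<gamma>\<close> as coefficients; taking max-norms gives the contraction estimate. The estimate holds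
  equally with \<open>\<gamma>\<close> replaced by any \<open>g \<ge> \<gamma>\<close>, and since \<open>\<parallel>T\<^sub>\<gamma>\<parallel>\<^sub>\<infinity> < 1\<close> is an open condition we may
  take \<open>g > 0\<close>, so that geometric decay of the weighted error controls \<open>x\<^sup>k - x*\<close> and forces any
  second solution to coincide with \<open>x*\<close>.
\<close>

lemma matrix_inv_mult_left:
  assumes "invertible (M :: real ^ 'n ^ 'n)"
  shows "matrix_inv M ** M = mat 1"
proof -
  have "\<exists>M'. M ** M' = mat 1 \<and> M' ** M = mat 1"
    using assms by (simp add: invertible_def)
  from someI_ex[OF this] show ?thesis
    by (simp add: matrix_inv_def)
qed

lemma norm_mult_vec_le_snorm: "norm (M *v x) \<le> snorm M * norm x"
  unfolding snorm_def by (rule onorm) simp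

lemma snorm_nonneg: "snorm M \<ge> 0"
  unfolding snorm_def by (rule onorm_pos_le) simp

lemma lipschitz_const_nonneg:
  assumes "lipschitz_const (f :: real ^ 'n \<Rightarrow> real ^ 'n) L"
  shows "L \<ge> 0"
proof -
  define u :: "real ^ 'n" where "u = (\<chi> i. 1)"
  have "u \<noteq> 0"
    unfolding u_def by (metis vec_lambda_beta zero_index zero_neq_one)
  moreover have "0 \<le> L * norm (u - 0)"
    using assms unfolding lipschitz_const_def by (metis norm_ge_zero order_trans)
  ultimately show ?thesis
    by (simp add: zero_le_mult_iff)
qed

lemma norm_vabs_diff_le: "norm (vabs a - vabs b) \<le> norm (a - b)"
proof -
  have "(vabs a - vabs b) \<bullet> (vabs a - vabs b) \<le> (a - b) \<bullet> (a - b)"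
    unfolding inner_vec_def vabs_def
    by (rule sum_mono)
      (simp add: abs_le_square_iff[symmetric] abs_triangle_ineq3 flip: power2_eq_square)
  then show ?thesis
    by (simp add: norm_le)
qed

lemma pos_diag_mult_vec_nth:
  assumes "pos_diag W"
  shows "(W *v v) $ i = W $ i $ i * v $ i"
proof -
  have "(\<Sum>j\<in>UNIV. W $ i $ j * v $ j) = (\<Sum>j\<in>UNIV. if j = i then W $ i $ i * v $ i else 0)"
    by (rule sum.cong) (use assms in \<open>auto simp: pos_diag_def\<close>)
  then show ?thesis
    by (simp add: matrix_vector_mult_def)
qed

lemma VNCP_sol_vabs_residual:
  assumes W: "pos_diag W" and sol: "VNCP_sol A B \<phi> \<psi> z"
  shows "vabs ((A - W ** B) *v z + \<phi> z - W *v \<psi> z) = (A + W ** B) *v z + \<phi> z + W *v \<psi> z"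
proof -
  define u where "u = A *v z + \<phi> z"
  define v where "v = B *v z + \<psi> z"
  have u0: "\<And>i. u $ i \<ge> 0" and v0: "\<And>i. v $ i \<ge> 0" and "u \<bullet> v = 0"
    using sol unfolding VNCP_sol_def u_def v_def by auto
  then have "(\<Sum>i\<in>UNIV. u $ i * v $ i) = 0"
    by (simp add: inner_vec_def)
  then have uv: "\<And>i. u $ i * v $ i = 0"
    using sum_nonneg_eq_0_iff[of UNIV "\<lambda>i. u $ i * v $ i"] u0 v0 by auto
  have "\<bar>u $ i - W $ i $ i * v $ i\<bar> = u $ i + W $ i $ i * v $ i" for i
  proof -
    have "W $ i $ i > 0"
      using W by (simp add: pos_diag_def)
    then show ?thesis
      using uv[of i] u0[of i] v0[of i] by (cases "u $ i = 0") auto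
  qed
  then have "vabs (u - W *v v) = u + W *v v"
    unfolding vabs_def by (simp add: vec_eq_iff pos_diag_mult_vec_nth[OF W])
  then show ?thesis
    unfolding u_def v_def
    by (simp add: matrix_vector_mult_diff_rdistrib matrix_vector_mult_add_rdistrib
        matrix_vector_right_distrib matrix_vector_mul_assoc algebra_simps)
qed

lemma VNCP_sol_fixed_point:
  assumes "pos_diag W" and "VNCP_sol A B \<phi> \<psi> z" and "A + W ** B = M - N" and "invertible M"
  shows "z = matrix_inv M *v (N *v z + vabs ((A - W ** B) *v z + \<phi> z - W *v \<psi> z) - \<phi> z - W *v \<psi> z)"
proof -
  have "N *v z + vabs ((A - W ** B) *v z + \<phi> z - W *v \<psi> z) - \<phi> z - W *v \<psi> z = M *v z"
    unfolding VNCP_sol_vabs_residual[OF assms(1,2)] assms(3)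
    by (simp add: matrix_vector_mult_diff_rdistrib)
  then show ?thesis
    by (simp add: matrix_vector_mul_assoc matrix_inv_mult_left[OF assms(4)])
qed

lemma lipschitz_terms_le:
  assumes "lipschitz_const \<phi> L1" and "lipschitz_const \<psi> L2"
  shows "norm (K *v (u - v)) + norm (\<phi> u - \<phi> v) + norm (W *v (\<psi> u - \<psi> v))
           \<le> (snorm K + L1 + L2 * snorm W) * norm (u - v)"
proof -
  have "norm (W *v (\<psi> u - \<psi> v)) \<le> snorm W * (L2 * norm (u - v))"
    using norm_mult_vec_le_snorm[of W "\<psi> u - \<psi> v"] assms(2) snorm_nonneg[of W]
    unfolding lipschitz_const_def by (meson mult_left_mono order_trans)
  then show ?thesis
    using norm_mult_vec_le_snorm[of K "u - v"] assms(1)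
    unfolding lipschitz_const_def by (smt (verit) distrib_right mult.commute mult.left_commute)
qed

lemma fpi_x_error_le:
  assumes "lipschitz_const \<phi> L1" and "lipschitz_const \<psi> L2"
    and x1: "x1 = Mi *v (N *v x0 + y0 - \<phi> x0 - W *v \<psi> x0)"
    and xs: "xs = Mi *v (N *v xs + ys - \<phi> xs - W *v \<psi> xs)"
  shows "norm (x1 - xs)
           \<le> snorm Mi * ((snorm N + L1 + L2 * snorm W) * norm (x0 - xs) + norm (y0 - ys))"
proof -
  define r where "r = N *v (x0 - xs) + (y0 - ys) - (\<phi> x0 - \<phi> xs) - W *v (\<psi> x0 - \<psi> xs)"
  have "x1 - xs = Mi *v ((N *v x0 + y0 - \<phi> x0 - W *v \<psi> x0) - (N *v xs + ys - \<phi> xs - W *v \<psi> xs))"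
    by (subst x1, subst xs) (simp only: matrix_vector_mult_diff_distrib)
  also have "(N *v x0 + y0 - \<phi> x0 - W *v \<psi> x0) - (N *v xs + ys - \<phi> xs - W *v \<psi> xs) = r"
    unfolding r_def by (simp add: matrix_vector_mult_diff_distrib algebra_simps)
  finally have "x1 - xs = Mi *v r" .
  moreover have "norm r \<le> norm (N *v (x0 - xs)) + norm (y0 - ys) + norm (\<phi> x0 - \<phi> xs)
                           + norm (W *v (\<psi> x0 - \<psi> xs))"
    unfolding r_def by (smt (verit) norm_triangle_ineq norm_triangle_ineq4)
  ultimately show ?thesis
    using norm_mult_vec_le_snorm[of Mi r] lipschitz_terms_le[OF assms(1,2), of N x0 xs W]
    by (smt (verit) mult_left_mono snorm_nonneg)
qed

lemma fpi_y_error_le: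
  assumes "lipschitz_const \<phi> L1" and "lipschitz_const \<psi> L2" and "\<tau> \<ge> 0"
    and y1: "y1 = (1 - \<tau>) *\<^sub>R y0 + \<tau> *\<^sub>R vabs (C *v x1 + \<phi> x1 - W *v \<psi> x1)"
    and ys: "ys = vabs (C *v xs + \<phi> xs - W *v \<psi> xs)"
  shows "norm (y1 - ys)
           \<le> \<bar>1 - \<tau>\<bar> * norm (y0 - ys) + \<tau> * ((snorm C + L1 + L2 * snorm W) * norm (x1 - xs))"
proof -
  define d where "d = vabs (C *v x1 + \<phi> x1 - W *v \<psi> x1) - vabs (C *v xs + \<phi> xs - W *v \<psi> xs)"
  have "y1 - ys = (1 - \<tau>) *\<^sub>R (y0 - ys) + \<tau> *\<^sub>R d"
    unfolding d_def y1 ys by (simp add: algebra_simps)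
  then have "norm (y1 - ys) \<le> \<bar>1 - \<tau>\<bar> * norm (y0 - ys) + \<tau> * norm d"
    using norm_triangle_ineq[of "(1 - \<tau>) *\<^sub>R (y0 - ys)" "\<tau> *\<^sub>R d"] \<open>\<tau> \<ge> 0\<close> by simp
  moreover have "(C *v x1 + \<phi> x1 - W *v \<psi> x1) - (C *v xs + \<phi> xs - W *v \<psi> xs)
                   = C *v (x1 - xs) + (\<phi> x1 - \<phi> xs) - W *v (\<psi> x1 - \<psi> xs)"
    by (simp add: matrix_vector_mult_diff_distrib algebra_simps)
  then have "norm d \<le> norm (C *v (x1 - xs)) + norm (\<phi> x1 - \<phi> xs) + norm (W *v (\<psi> x1 - \<psi> xs))"
    unfolding d_def using norm_vabs_diff_le
    by (smt (verit) norm_triangle_ineq norm_triangle_ineq4)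
  ultimately show ?thesis
    using lipschitz_terms_le[OF assms(1,2), of C x1 xs W] \<open>\<tau> \<ge> 0\<close>
    by (smt (verit) mult_left_mono)
qed

lemma abs_le_norm_inf2_left: "\<bar>a\<bar> \<le> norm_inf2 a b"
  by (simp add: norm_inf2_def)

lemma mnorm_inf2_nonneg: "0 \<le> mnorm_inf2 p q r s"
  by (simp add: mnorm_inf2_def le_max_iff_disj)

lemma norm_inf2_le_mnorm_inf2:
  fixes u0 v0 u1 v1 p q r s :: real
  assumes "0 \<le> u0" "0 \<le> v0" "0 \<le> u1" "0 \<le> v1" "0 \<le> p" "0 \<le> q" "0 \<le> r" "0 \<le> s"
    and "u1 \<le> p * u0 + q * v0" and "v1 \<le> r * u0 + s * v0"
  shows "norm_inf2 u1 v1 \<le> mnorm_inf2 p q r s * norm_inf2 u0 v0"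
proof -
  define E where "E = max u0 v0"
  have "u1 \<le> (p + q) * E" "v1 \<le> (r + s) * E"
    using assms unfolding E_def
    by (smt (verit) distrib_right max.cobounded1 max.cobounded2 mult_left_mono)+
  moreover have "E \<ge> 0"
    using assms(1) by (simp add: E_def)
  ultimately show ?thesis
    using assms(1-8) unfolding norm_inf2_def mnorm_inf2_def E_def
    by (smt (verit) max.cobounded1 max.cobounded2 mult_right_mono)
qed

lemma fpi_error_contraction:
  fixes C Mi N W :: "real ^ 'n ^ 'n" and \<phi> \<psi> :: "real ^ 'n \<Rightarrow> real ^ 'n"
  assumes L1: "lipschitz_const \<phi> L1" and L2: "lipschitz_const \<psi> L2" and "\<tau> \<ge> 0"
    and x1: "x1 = Mi *v (N *v x0 + y0 - \<phi> x0 - W *v \<psi> x0)"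
    and y1: "y1 = (1 - \<tau>) *\<^sub>R y0 + \<tau> *\<^sub>R vabs (C *v x1 + \<phi> x1 - W *v \<psi> x1)"
    and xs: "xs = Mi *v (N *v xs + ys - \<phi> xs - W *v \<psi> xs)"
    and ys: "ys = vabs (C *v xs + \<phi> xs - W *v \<psi> xs)"
    and g: "snorm C + L1 + L2 * snorm W \<le> g"
  defines "\<alpha> \<equiv> snorm Mi" and "\<beta> \<equiv> snorm N + L1 + L2 * snorm W"
  shows "norm_inf2 (g * norm (x1 - xs)) (norm (y1 - ys))
           \<le> mnorm_inf2 (\<alpha> * \<beta>) (\<alpha> * g) (\<tau> * \<alpha> * \<beta>) (\<tau> * \<alpha> * g + \<bar>1 - \<tau>\<bar>)
             * norm_inf2 (g * norm (x0 - xs)) (norm (y0 - ys))"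
proof -
  have "0 \<le> L1" "0 \<le> L2"
    using L1 L2 by (simp_all add: lipschitz_const_nonneg)
  then have nonneg: "0 \<le> \<alpha>" "0 \<le> \<beta>" "0 \<le> g"
    using g snorm_nonneg[of C] snorm_nonneg[of W] snorm_nonneg[of N] snorm_nonneg[of Mi]
    unfolding \<alpha>_def \<beta>_def by (smt (verit) mult_nonneg_nonneg)+
  have ex: "norm (x1 - xs) \<le> \<alpha> * (\<beta> * norm (x0 - xs) + norm (y0 - ys))"
    unfolding \<alpha>_def \<beta>_def by (rule fpi_x_error_le[OF L1 L2 x1 xs])
  then have gx: "g * norm (x1 - xs) \<le> \<alpha> * \<beta> * (g * norm (x0 - xs)) + \<alpha> * g * norm (y0 - ys)"
    using mult_left_mono[OF ex \<open>0 \<le> g\<close>] by (simp add: algebra_simps)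
  have "norm (y1 - ys) \<le> \<bar>1 - \<tau>\<bar> * norm (y0 - ys) + \<tau> * (g * norm (x1 - xs))"
    using fpi_y_error_le[OF L1 L2 \<open>\<tau> \<ge> 0\<close> y1 ys] g \<open>\<tau> \<ge> 0\<close>
    by (smt (verit) mult_left_mono mult_right_mono norm_ge_zero)
  also have "\<dots> \<le> \<tau> * \<alpha> * \<beta> * (g * norm (x0 - xs)) + (\<tau> * \<alpha> * g + \<bar>1 - \<tau>\<bar>) * norm (y0 - ys)"
    using mult_left_mono[OF gx \<open>\<tau> \<ge> 0\<close>] by (simp add: algebra_simps)
  finally show ?thesis
    using gx nonneg \<open>\<tau> \<ge> 0\<close> by (intro norm_inf2_le_mnorm_inf2) auto
qed

lemma fpi_fixed_point_unique:
  fixes C Mi N W :: "real ^ 'n ^ 'n" and \<phi> \<psi> :: "real ^ 'n \<Rightarrow> real ^ 'n"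
  assumes L1: "lipschitz_const \<phi> L1" and L2: "lipschitz_const \<psi> L2" and "\<tau> \<ge> 0"
    and z: "z = Mi *v (N *v z + vabs (C *v z + \<phi> z - W *v \<psi> z) - \<phi> z - W *v \<psi> z)"
    and xs: "xs = Mi *v (N *v xs + ys - \<phi> xs - W *v \<psi> xs)"
    and ys: "ys = vabs (C *v xs + \<phi> xs - W *v \<psi> xs)"
    and g: "snorm C + L1 + L2 * snorm W \<le> g" "0 < g"
    and rate: "mnorm_inf2 (snorm Mi * (snorm N + L1 + L2 * snorm W)) (snorm Mi * g)
                 (\<tau> * snorm Mi * (snorm N + L1 + L2 * snorm W)) (\<tau> * snorm Mi * g + \<bar>1 - \<tau>\<bar>) < 1"
  shows "z = xs"
proof -
  define yz where "yz = vabs (C *v z + \<phi> z - W *v \<psi> z)"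
  define e where "e = norm_inf2 (g * norm (z - xs)) (norm (yz - ys))"
  have "yz = (1 - \<tau>) *\<^sub>R yz + \<tau> *\<^sub>R vabs (C *v z + \<phi> z - W *v \<psi> z)"
    by (simp add: yz_def algebra_simps)
  from fpi_error_contraction[OF L1 L2 \<open>\<tau> \<ge> 0\<close> z[folded yz_def] this xs ys g(1)]
  have "e \<le> mnorm_inf2 (snorm Mi * (snorm N + L1 + L2 * snorm W)) (snorm Mi * g)
                 (\<tau> * snorm Mi * (snorm N + L1 + L2 * snorm W)) (\<tau> * snorm Mi * g + \<bar>1 - \<tau>\<bar>) * e"
    by (simp add: e_def)
  moreover have "0 \<le> e"
    by (simp add: e_def norm_inf2_def)
  ultimately have "e \<le> 0"
    using mult_strict_right_mono[OF rate, of e] by fastforce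
  then have "g * norm (z - xs) \<le> 0"
    unfolding e_def norm_inf2_def by linarith
  then show ?thesis
    using \<open>0 < g\<close> by (simp add: mult_le_0_iff)
qed

lemma mnorm_inf2_iteration_less_one_iff:
  fixes \<alpha> \<beta> \<gamma> \<tau> :: real
  assumes "0 \<le> \<alpha>" "0 \<le> \<beta>" "0 \<le> \<gamma>" "0 < \<tau>"
  shows "mnorm_inf2 (\<alpha> * \<beta>) (\<alpha> * \<gamma>) (\<tau> * \<alpha> * \<beta>) (\<tau> * \<alpha> * \<gamma> + \<bar>1 - \<tau>\<bar>) < 1 \<longleftrightarrow>
         \<alpha> * (\<beta> + \<gamma>) < 1 \<and> 0 < \<tau> \<and> \<tau> < 2 / (\<alpha> * (\<beta> + \<gamma>) + 1)"
proof -
  define s where "s = \<alpha> * (\<beta> + \<gamma>)"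
  have "0 \<le> s"
    using assms by (simp add: s_def)
  have "mnorm_inf2 (\<alpha> * \<beta>) (\<alpha> * \<gamma>) (\<tau> * \<alpha> * \<beta>) (\<tau> * \<alpha> * \<gamma> + \<bar>1 - \<tau>\<bar>)
          = max s (\<tau> * s + \<bar>1 - \<tau>\<bar>)"
    using assms unfolding mnorm_inf2_def s_def by (simp add: algebra_simps)
  moreover have "\<tau> < 2 / (s + 1) \<longleftrightarrow> \<tau> * (s + 1) < 2"
    using \<open>0 \<le> s\<close> by (simp add: pos_less_divide_eq)
  moreover have "max s (\<tau> * s + \<bar>1 - \<tau>\<bar>) < 1 \<longleftrightarrow> s < 1 \<and> \<tau> * (s + 1) < 2"
  proof (cases "\<tau> \<le> 1")
    case True
    then have "\<tau> * (s + 1) \<le> s + 1"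
      using \<open>0 \<le> s\<close> by (simp add: mult_left_le_one_le)
    moreover have "\<tau> * s < \<tau> \<longleftrightarrow> s < 1"
      using \<open>0 < \<tau>\<close> by (metis mult.right_neutral mult_less_cancel_left_pos)
    ultimately show ?thesis
      using True by (auto simp: algebra_simps)
  next
    case False
    then have "s + 1 < \<tau> * (s + 1)"
      using \<open>0 \<le> s\<close> by (simp add: mult_less_cancel_right1)
    then show ?thesis
      using False by (auto simp: algebra_simps)
  qed
  ultimately show ?thesis
    using assms(4) by (simp add: s_def)
qed

lemma iteration_rate_slack:
  fixes \<alpha> \<beta> \<gamma> \<tau> :: real
  assumes "0 \<le> \<alpha>" "0 \<le> \<beta>" "0 \<le> \<gamma>" "0 < \<tau>"
    and "\<alpha> * (\<beta> + \<gamma>) < 1" and "\<tau> < 2 / (\<alpha> * (\<beta> + \<gamma>) + 1)"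
  obtains g where "\<gamma> \<le> g" "0 < g" "\<alpha> * (\<beta> + g) < 1" "\<tau> < 2 / (\<alpha> * (\<beta> + g) + 1)"
proof -
  have bound_iff: "\<tau> < 2 / (\<alpha> * (\<beta> + h) + 1) \<longleftrightarrow> \<alpha> * (\<beta> + h) < 2 / \<tau> - 1" if "0 \<le> h" for h
  proof -
    have "0 \<le> \<alpha> * (\<beta> + h)"
      using assms(1,2) that by simp
    then have "0 < \<alpha> * (\<beta> + h) + 1"
      by linarith
    then show ?thesis
      using assms(4) by (simp add: pos_less_divide_eq less_diff_eq mult.commute)
  qed
  define c where "c = min 1 (2 / \<tau> - 1)"
  have gap: "\<alpha> * (\<beta> + \<gamma>) < c"
    using assms(5,6) bound_iff[OF assms(3)] by (simp add: c_def)
  define g where "g = \<gamma> + (c - \<alpha> * (\<beta> + \<gamma>)) / (\<alpha> + 1)"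
  have "0 < (c - \<alpha> * (\<beta> + \<gamma>)) / (\<alpha> + 1)"
    using gap assms(1) by simp
  moreover have "\<alpha> * ((c - \<alpha> * (\<beta> + \<gamma>)) / (\<alpha> + 1)) < c - \<alpha> * (\<beta> + \<gamma>)"
    using gap assms(1) by (simp add: field_simps)
  ultimately have "\<gamma> \<le> g" "0 < g" "\<alpha> * (\<beta> + g) < c"
    using assms(3) by (auto simp: g_def algebra_simps)
  then show ?thesis
    using that bound_iff[of g] by (simp add: c_def)
qed

lemma tendsto_of_contracting_error:
  fixes x :: "nat \<Rightarrow> 'a :: real_normed_vector"
  assumes step: "\<And>k. E (Suc k) \<le> \<rho> * E k" and "0 \<le> \<rho>" "\<rho> < 1"
    and "0 < g" and dominated: "\<And>k. g * norm (x k - a) \<le> E k"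
  shows "x \<longlonglongrightarrow> a"
proof -
  have geometric: "E k \<le> \<rho> ^ k * E 0" for k
  proof (induction k)
    case (Suc k)
    then show ?case
      using step[of k] mult_left_mono[OF Suc \<open>0 \<le> \<rho>\<close>] by simp
  qed simp
  have "g * norm (x k - a) \<le> g * (\<rho> ^ k * (E 0 / g))" for k
    using dominated[of k] geometric[of k] \<open>0 < g\<close> by simp
  then have bound: "norm (x k - a) \<le> \<rho> ^ k * (E 0 / g)" for k
    using \<open>0 < g\<close> by (meson mult_le_cancel_left_pos)
  have "(\<lambda>k. \<rho> ^ k) \<longlonglongrightarrow> 0"
    using \<open>0 \<le> \<rho>\<close> \<open>\<rho> < 1\<close> by (simp add: LIMSEQ_power_zero)
  then have "(\<lambda>k. \<rho> ^ k * (E 0 / g)) \<longlonglongrightarrow> 0"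
    by (rule tendsto_mult_left_zero)
  then have "(\<lambda>k. x k - a) \<longlonglongrightarrow> 0"
    by (rule Lim_null_comparison[rotated]) (use bound in \<open>simp del: times_divide_eq_right\<close>)
  then show ?thesis
    by (rule LIM_zero_cancel)
qed

theorem theorem3p2:
  fixes A B W M N :: "real ^ 'n ^ 'n"
    and \<phi> \<psi> :: "real ^ 'n \<Rightarrow> real ^ 'n"
    and L1 L2 \<tau> :: real
    and x y :: "nat \<Rightarrow> real ^ 'n"
    and xs :: "real ^ 'n"
  assumes W: "pos_diag W"
    and phi_cw: "componentwise \<phi>" and psi_cw: "componentwise \<psi>"
    and L1: "lipschitz_const \<phi> L1" and L2: "lipschitz_const \<psi> L2"
    and split: "A + W ** B = M - N"
    and Minv: "invertible M"
    and tau: "\<tau> > 0"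
    and xrec: "\<And>k. x (Suc k) = matrix_inv M *v (N *v x k + y k - \<phi> (x k) - W *v \<psi> (x k))"
    and yrec: "\<And>k. y (Suc k) = (1 - \<tau>) *\<^sub>R y k
                  + \<tau> *\<^sub>R vabs ((A - W ** B) *v x (Suc k) + \<phi> (x (Suc k)) - W *v \<psi> (x (Suc k)))"
    and sol: "VNCP_sol A B \<phi> \<psi> xs"
  defines "\<alpha> \<equiv> snorm (matrix_inv M)"
    and "\<beta> \<equiv> snorm N + L1 + L2 * snorm W"
    and "\<gamma> \<equiv> snorm (A - W ** B) + L1 + L2 * snorm W"
    and "ys \<equiv> vabs ((A - W ** B) *v xs + \<phi> xs - W *v \<psi> xs)"
  shows "(\<forall>k. norm_inf2 (\<gamma> * norm (x (Suc k) - xs)) (norm (y (Suc k) - ys))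
              \<le> mnorm_inf2 (\<alpha> * \<beta>) (\<alpha> * \<gamma>) (\<tau> * \<alpha> * \<beta>) (\<tau> * \<alpha> * \<gamma> + \<bar>1 - \<tau>\<bar>)
                * norm_inf2 (\<gamma> * norm (x k - xs)) (norm (y k - ys)))
       \<and> (mnorm_inf2 (\<alpha> * \<beta>) (\<alpha> * \<gamma>) (\<tau> * \<alpha> * \<beta>) (\<tau> * \<alpha> * \<gamma> + \<bar>1 - \<tau>\<bar>) < 1
            \<longleftrightarrow> \<alpha> * (\<beta> + \<gamma>) < 1 \<and> 0 < \<tau> \<and> \<tau> < 2 / (\<alpha> * (\<beta> + \<gamma>) + 1))
       \<and> (\<alpha> * (\<beta> + \<gamma>) < 1 \<and> 0 < \<tau> \<and> \<tau> < 2 / (\<alpha> * (\<beta> + \<gamma>) + 1)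
            \<longrightarrow> x \<longlonglongrightarrow> xs \<and> (\<forall>z. VNCP_sol A B \<phi> \<psi> z \<longrightarrow> z = xs))"
proof -
  have "0 \<le> L1" "0 \<le> L2"
    using L1 L2 by (simp_all add: lipschitz_const_nonneg)
  then have nonneg: "0 \<le> \<alpha>" "0 \<le> \<beta>" "0 \<le> \<gamma>"
    unfolding \<alpha>_def \<beta>_def \<gamma>_def by (simp_all add: snorm_nonneg)
  have ys: "ys = vabs ((A - W ** B) *v xs + \<phi> xs - W *v \<psi> xs)"
    by (simp add: ys_def)
  have xs: "xs = matrix_inv M *v (N *v xs + ys - \<phi> xs - W *v \<psi> xs)"
    unfolding ys by (rule VNCP_sol_fixed_point[OF W sol split Minv])
  have contraction: "norm_inf2 (g * norm (x (Suc k) - xs)) (norm (y (Suc k) - ys))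
      \<le> mnorm_inf2 (\<alpha> * \<beta>) (\<alpha> * g) (\<tau> * \<alpha> * \<beta>) (\<tau> * \<alpha> * g + \<bar>1 - \<tau>\<bar>)
        * norm_inf2 (g * norm (x k - xs)) (norm (y k - ys))" if "\<gamma> \<le> g" for g k
    using fpi_error_contraction[OF L1 L2 _ xrec yrec xs ys] tau that
    unfolding \<alpha>_def \<beta>_def \<gamma>_def by simp
  moreover have "x \<longlonglongrightarrow> xs \<and> (\<forall>z. VNCP_sol A B \<phi> \<psi> z \<longrightarrow> z = xs)"
    if small: "\<alpha> * (\<beta> + \<gamma>) < 1" "\<tau> < 2 / (\<alpha> * (\<beta> + \<gamma>) + 1)"
  proof -
    obtain g where g: "\<gamma> \<le> g" "0 < g" "\<alpha> * (\<beta> + g) < 1" "\<tau> < 2 / (\<alpha> * (\<beta> + g) + 1)"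
      using iteration_rate_slack[OF nonneg tau small] .
    then have rate: "mnorm_inf2 (\<alpha> * \<beta>) (\<alpha> * g) (\<tau> * \<alpha> * \<beta>) (\<tau> * \<alpha> * g + \<bar>1 - \<tau>\<bar>) < 1"
      using mnorm_inf2_iteration_less_one_iff[OF nonneg(1,2) _ tau, of g] tau by simp
    have "x \<longlonglongrightarrow> xs"
      using contraction[OF g(1)] mnorm_inf2_nonneg rate g(2) abs_le_norm_inf2_left order_trans abs_ge_self
      by (intro tendsto_of_contracting_error[where E = "\<lambda>k. norm_inf2 (g * norm (x k - xs)) (norm (y k - ys))"])
        blast+
    moreover have "z = xs" if "VNCP_sol A B \<phi> \<psi> z" for z
      using fpi_fixed_point_unique[OF L1 L2 less_imp_le[OF tau] VNCP_sol_fixed_point[OF W that split Minv] xs ys, of g]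
        g rate unfolding \<alpha>_def \<beta>_def \<gamma>_def by simp
    ultimately show ?thesis
      by blast
  qed
  ultimately show ?thesis
    using mnorm_inf2_iteration_less_one_iff[OF nonneg tau] tau by blast
qed

end
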